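(* Let $r\ge2$, $(\mathbb{X},\mathcal{X})$ a Polish space, $G_0$ a probability measure on $\mathbb{X}^r$ with marginals $G_{0i}$, and $0\le l<1$. Let $G_i=\sum_{k\ge1}W_{ik}\delta_{\tilde\varphi_{ik}}$, $i=1,\dots,r$, where $(\tilde\varphi_{1k},\dots,\tilde\varphi_{rk})_{k\ge1}$ are i.i.d. with law $G_0$, independent of the weights, $W_{ik}=S_{ik}\prod_{j<k}(1-S_{ij})$, and the vectors $S_k=(S_{1k},\dots,S_{rk})$, $k\ge1$, are independent. (a) Suppose $\alpha_1,\alpha_2>0$ and $(S_{1k},\dots,S_{rk})=(V_{0k}V_{1k},V_{0k}V_{2k},\dots,V_{0k}V_{rk})$ with $V_{0k},\dots,V_{rk}$ independent, $V_{0k}\sim Beta(1-l+\alpha_1,\alpha_2+lk)$ and $V_{ik}\sim Beta(1-l,\alpha_1)$ for $i=1,\dots,r$. Then $G_i$ is a Poisson--Dirichlet process $PD(\alpha_1+\alpha_2,l,G_{0i})$ for every $i=1,\dots,r$. (b) Suppose $\alpha_1,\dots,\alpha_r>0$ and $(S_{1k},S_{2k},\dots,S_{rk})=(V_{0k}V_{1k}\cdots V_{r-1,k},\,V_{0k}V_{1k}\cdots V_{r-2,k},\,\dots,\,V_{0k})$, i.e. $S_{ik}=V_{0k}V_{1k}\cdots V_{r-i,k}$, with $V_{0k},\dots,V_{r-1,k}$ independent, $V_{0k}\sim Beta(1-l,\alpha_1+lk)$ and $V_{jk}\sim Beta(1+\alpha_1+\dots+\alpha_j+l(k-1),\alpha_{j+1})$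 for $j=1,\dots,r-1$. Then $G_i$ is a $PD(\alpha_1+\dots+\alpha_{r-i+1},l,G_{0i})$ for every $i=1,\dots,r$.
   Context: For $0\le l<1$, $\alpha>-l$ and a probability measure $H$ on $\mathbb{X}$, the Poisson--Dirichlet process $PD(\alpha,l,H)$ is the law of $\sum_{k\ge1}W_k\delta_{\xi_k}$, where $(\xi_k)$ are i.i.d. with law $H$, independent of $(W_k)$, and $W_k=S_k\prod_{j<k}(1-S_j)$ with $S_k$ independent, $S_k\sim Beta(1-l,\alpha+lk)$. $\delta_x$ is the Dirac mass at $x$. *)

theory Defs
  imports "HOL-Probability.Probability"
begin

definition beta_density :: "real \<Rightarrow> real \<Rightarrow> real \<Rightarrow> real" where
  "beta_density a b x =
     (if 0 < x \<and> x < 1 then x powr (a - 1) * (1 - x) powr (b - 1) / Beta a b else 0)"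

definition beta_measure :: "real \<Rightarrow> real \<Rightarrow> real measure" where
  "beta_measure a b = density lborel (\<lambda>x. ennreal (beta_density a b x))"

text \<open>Stick-breaking weights, indexed from 0: W k = S k * prod_{j<k} (1 - S j).\<close>
definition stick_weights :: "(nat \<Rightarrow> real) \<Rightarrow> nat \<Rightarrow> real" where
  "stick_weights s k = s k * (\<Prod>j<k. 1 - s j)"

definition atomic_rm :: "(nat \<Rightarrow> real) \<Rightarrow> (nat \<Rightarrow> 'x) \<Rightarrow> 'x set \<Rightarrow> ennreal" where
  "atomic_rm w \<xi> A = (\<Sum>k. ennreal (w k) * indicator A (\<xi> k))"

text \<open>Canonical probability space for PD(alpha,l,H): independent
  S_k ~ Beta(1-l, alpha + l*k) (paper index k = Suc k here), independent of i.i.d. xi_k ~ H.\<close>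
definition PD_space :: "real \<Rightarrow> real \<Rightarrow> 'x measure \<Rightarrow> ((nat \<Rightarrow> real) \<times> (nat \<Rightarrow> 'x)) measure" where
  "PD_space \<alpha> l H =
     (PiM UNIV (\<lambda>k. beta_measure (1 - l) (\<alpha> + l * real (Suc k)))) \<Otimes>\<^sub>M (PiM UNIV (\<lambda>_. H))"

definition PD_rm :: "((nat \<Rightarrow> real) \<times> (nat \<Rightarrow> 'x)) \<Rightarrow> 'x set \<Rightarrow> ennreal" where
  "PD_rm p = atomic_rm (stick_weights (fst p)) (snd p)"

definition same_law_rm ::
  "'x measure \<Rightarrow> 'a measure \<Rightarrow> ('a \<Rightarrow> 'x set \<Rightarrow> ennreal) \<Rightarrow> 'b measure \<Rightarrow> ('b \<Rightarrow> 'x set \<Rightarrow> ennreal) \<Rightarrow> bool"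
  where
  "same_law_rm X M G N F \<longleftrightarrow>
     (\<forall>As. set As \<subseteq> sets X \<longrightarrow>
        distr M (PiM {..<length As} (\<lambda>_. borel)) (\<lambda>\<omega>. restrict (\<lambda>n. G \<omega> (As ! n)) {..<length As})
      = distr N (PiM {..<length As} (\<lambda>_. borel)) (\<lambda>\<omega>. restrict (\<lambda>n. F \<omega> (As ! n)) {..<length As}))"

definition is_PD :: "'x measure \<Rightarrow> 'w measure \<Rightarrow> ('w \<Rightarrow> 'x set \<Rightarrow> ennreal) \<Rightarrow> real \<Rightarrow> real \<Rightarrow> 'x measure \<Rightarrow> bool"
  where "is_PD X M G \<alpha> l H \<longleftrightarrow> same_law_rm X M G (PD_space \<alpha> l H) PD_rm"

end

theory Submission
  imports Defs
begin

text \<open>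
  If X ~ Beta(a, b) and Y ~ Beta(a + b, c) are independent, then Y X ~ Beta(a, b + c).
  In (a) this makes S_ik = V_0k V_ik a Beta(1 - l, \<alpha>_1 + \<alpha>_2 + l k) variable; in (b) the
  partial products V_0k \<cdots> V_jk telescope to Beta(1 - l, \<alpha>_1 + \<dots> + \<alpha>_(j+1) + l k).
  For fixed i the weights S_ik are independent in k and independent of the atoms
  \<phi>_ki ~ G_0i, so weights and atoms jointly have the law of the canonical PD model, and
  every finite-dimensional law of G_i is that of PD(\<theta>_i, l, G_0i).
\<close>

lemma Beta_real_pos: "0 < a \<Longrightarrow> 0 < b \<Longrightarrow> 0 < Beta a (b::real)"
  by (simp add: Beta_def)

lemma Beta_mult_Beta:
  fixes a b c :: real
  assumes "0 < a" "0 < b" "0 < c"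
  shows "Beta a b * Beta (a + b) c = Beta a (b + c) * Beta b c"
proof -
  have "Gamma (a + b) > 0" "Gamma (b + c) > 0"
    using assms by auto
  then show ?thesis
    by (simp add: Beta_def field_simps)
qed

lemma beta_density_nonneg: "0 < a \<Longrightarrow> 0 < b \<Longrightarrow> 0 \<le> beta_density a b x"
  by (simp add: beta_density_def Beta_real_pos less_imp_le)

lemma borel_measurable_beta_density [measurable]: "beta_density a b \<in> borel_measurable borel"
  unfolding beta_density_def by measurable

lemma nn_integral_Beta:
  fixes b c :: real
  assumes "0 < b" "0 < c"
  shows "(\<integral>\<^sup>+t. ennreal (t powr (b - 1) * (1 - t) powr (c - 1)) * indicator {0<..<1} t \<partial>lborel)
       = ennreal (Beta b c)"
  using has_integral_Beta_real[OF assms]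
  by (intro nn_integral_has_integral_lebesgue') (simp_all add: has_integral_Icc_iff_Ioo)

lemma nn_integral_Beta_shifted:
  fixes b c z :: real
  assumes b: "0 < b" and c: "0 < c" and z: "z < 1"
  shows "(\<integral>\<^sup>+y. ennreal ((y - z) powr (b - 1) * (1 - y) powr (c - 1)) * indicator {z<..<1} y \<partial>lborel)
       = ennreal ((1 - z) powr (b + c - 1) * Beta b c)"
proof -
  let ?f = "\<lambda>y. ennreal ((y - z) powr (b - 1) * (1 - y) powr (c - 1)) * indicator {z<..<1} y"
  let ?g = "\<lambda>t. ennreal (t powr (b - 1) * (1 - t) powr (c - 1)) * indicator {0<..<1} t"
  have subst: "?f (z + (1 - z) * t) = ennreal ((1 - z) powr (b + c - 2)) * ?g t" for t
  proof -
    have "0 < (1 - z) * t \<longleftrightarrow> 0 < t" "(1 - z) * t < (1 - z) * 1 \<longleftrightarrow> t < 1"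
      using z by (simp_all add: zero_less_mult_iff mult_less_cancel_left_pos)
    then have "z + (1 - z) * t \<in> {z<..<1} \<longleftrightarrow> t \<in> {0<..<1}"
      by auto
    moreover have "(1 - z) powr (b + c - 2) = (1 - z) powr (b - 1) * (1 - z) powr (c - 1)"
      by (simp add: powr_add[symmetric])
    moreover have "1 - (z + (1 - z) * t) = (1 - z) * (1 - t)"
      by (simp add: algebra_simps)
    ultimately show ?thesis
      using z by (auto simp: indicator_def powr_mult ennreal_mult[symmetric] mult_ac)
  qed
  have "(\<integral>\<^sup>+y. ?f y \<partial>lborel) = ennreal (1 - z) * (\<integral>\<^sup>+t. ?f (z + (1 - z) * t) \<partial>lborel)"
    using z by (subst nn_integral_real_affine[where c = "1 - z" and t = z]) auto
  also have "\<dots> = ennreal (1 - z) * (ennreal ((1 - z) powr (b + c - 2)) * ennreal (Beta b c))"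
    by (simp only: subst nn_integral_cmult_indicator) (simp add: nn_integral_cmult nn_integral_Beta b c)
  also have "\<dots> = ennreal ((1 - z) powr (b + c - 1) * Beta b c)"
  proof -
    have "(1 - z) * (1 - z) powr (b + c - 2) = (1 - z) powr (b + c - 1)"
      using z by (simp add: powr_add[symmetric] powr_mult_base)
    then show ?thesis
      using z b c Beta_real_pos[OF b c] by (simp add: ennreal_mult[symmetric] mult.assoc[symmetric])
  qed
  finally show ?thesis .
qed

lemma beta_density_quotient_eq:
  fixes a b c y z :: real
  assumes ab: "0 < a" "0 < b" and c: "0 < c" and z: "0 < z" "z < 1"
  shows "(if 0 < y \<and> y < 1 then beta_density (a + b) c y * beta_density a b (z / y) / y else 0)
       = z powr (a - 1) / (Beta a b * Beta (a + b) c)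
         * ((y - z) powr (b - 1) * (1 - y) powr (c - 1)) * indicator {z<..<1} y"
proof (cases "z < y \<and> y < 1")
  case True
  then have y: "0 < y" "0 < z / y" "z / y < 1"
    using z by (auto simp: divide_less_eq)
  have "y powr (a + b - 1) = y powr (a - 1) * y powr (b - 1) * y powr 1"
    unfolding powr_add[symmetric] by simp
  moreover have "1 - z / y = (y - z) / y"
    using y by (simp add: field_simps)
  moreover have "Beta a b > 0" "Beta (a + b) c > 0"
    using ab c by (simp_all add: Beta_real_pos)
  ultimately show ?thesis
    using True y by (simp add: beta_density_def powr_divide field_simps)
next
  case False
  then have "\<not> (0 < y \<and> y < 1) \<or> \<not> (0 < z / y \<and> z / y < 1)"
    using z by (auto simp: divide_less_eq)
  then show ?thesis
    using False by (auto simp: beta_density_def)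
qed

text \<open>The integrand is the density at \<open>z\<close> of \<open>Y X\<close> for independent \<open>X \<sim> Beta(a,b)\<close> and \<open>Y \<sim> Beta(a+b,c)\<close>.\<close>
lemma nn_integral_beta_density_quotient:
  fixes a b c z :: real
  assumes a: "0 < a" and b: "0 < b" and c: "0 < c"
  shows "(\<integral>\<^sup>+y. ennreal (if 0 < y \<and> y < 1 then beta_density (a + b) c y * beta_density a b (z / y) / y else 0) \<partial>lborel)
       = ennreal (beta_density a (b + c) z)"
proof (cases "0 < z \<and> z < 1")
  case True
  define C where "C = z powr (a - 1) / (Beta a b * Beta (a + b) c)"
  have C: "0 \<le> C"
    using Beta_real_pos[OF a b] Beta_real_pos[of "a + b" c] a b c by (simp add: C_def)
  have "(\<integral>\<^sup>+y. ennreal (if 0 < y \<and> y < 1 then beta_density (a + b) c y * beta_density a b (z / y) / y else 0) \<partial>lborel)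
      = (\<integral>\<^sup>+y. ennreal C * (ennreal ((y - z) powr (b - 1) * (1 - y) powr (c - 1)) * indicator {z<..<1} y) \<partial>lborel)"
    using a b c True C
    by (intro nn_integral_cong)
       (simp add: beta_density_quotient_eq C_def[symmetric] ennreal_mult' ennreal_indicator mult.assoc)
  also have "\<dots> = ennreal (C * ((1 - z) powr (b + c - 1) * Beta b c))"
    using nn_integral_Beta_shifted[OF b c, of z] True C
    by (subst nn_integral_cmult) (auto simp: ennreal_mult')
  also have "C * ((1 - z) powr (b + c - 1) * Beta b c) = beta_density a (b + c) z"
    using True Beta_mult_Beta[OF a b c] Beta_real_pos[OF b c] Beta_real_pos[OF a, of "b + c"] b c
    by (simp add: C_def beta_density_def field_simps)
  finally show ?thesis .
next
  case False
  have "(if 0 < y \<and> y < 1 then beta_density (a + b) c y * beta_density a b (z / y) / y else 0) = 0" for y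
    using False by (auto simp: beta_density_def divide_less_eq zero_less_divide_iff)
  moreover have "beta_density a (b + c) z = 0"
    unfolding beta_density_def using False by (rule if_not_P)
  ultimately show ?thesis
    by simp
qed

lemma sigma_finite_beta_measure: "sigma_finite_measure (beta_measure a b)"
  unfolding beta_measure_def
  by (subst sigma_finite_measure.sigma_finite_iff_density_finite[OF sigma_finite_lborel]) auto

lemma distr_beta_measure_mult:
  fixes a b c :: real
  assumes a: "0 < a" and b: "0 < b" and c: "0 < c"
  shows "distr (beta_measure (a + b) c \<Otimes>\<^sub>M beta_measure a b) borel (\<lambda>p. fst p * snd p)
       = beta_measure a (b + c)"
proof (rule measure_eqI)
  fix A assume "A \<in> sets (distr (beta_measure (a + b) c \<Otimes>\<^sub>M beta_measure a b) borel (\<lambda>p. fst p * snd p))"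
  then have A [measurable]: "A \<in> sets borel"
    by simp
  define f where "f = beta_density a b"
  define g where "g = beta_density (a + b) c"
  have [measurable]: "f \<in> borel_measurable borel" "g \<in> borel_measurable borel"
    unfolding f_def g_def by measurable
  have fg: "0 \<le> f x" "0 \<le> g x" for x
    unfolding f_def g_def using a b c by (simp_all add: beta_density_nonneg)
  have pair: "beta_measure (a + b) c \<Otimes>\<^sub>M beta_measure a b
      = density (lborel \<Otimes>\<^sub>M lborel) (\<lambda>(y, x). ennreal (g y) * ennreal (f x))"
    unfolding beta_measure_def f_def g_def
    by (rule pair_measure_density)
       (auto intro: sigma_finite_beta_measure[unfolded beta_measure_def] lborel.sigma_finite_measure_axioms)
  have "(\<lambda>p. fst p * snd p) -` A \<inter> space (lborel \<Otimes>\<^sub>M lborel) \<in> sets (lborel \<Otimes>\<^sub>M lborel)"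
    by measurable
  then have "emeasure (distr (beta_measure (a + b) c \<Otimes>\<^sub>M beta_measure a b) borel (\<lambda>p. fst p * snd p)) A
      = (\<integral>\<^sup>+p. ennreal (g (fst p)) * ennreal (f (snd p)) * indicator A (fst p * snd p) \<partial>(lborel \<Otimes>\<^sub>M lborel))"
    unfolding pair by (subst emeasure_distr) (auto simp: emeasure_density split_beta indicator_def
      intro!: nn_integral_cong)
  also have "\<dots> = (\<integral>\<^sup>+y. \<integral>\<^sup>+x. ennreal (g y) * ennreal (f x) * indicator A (y * x) \<partial>lborel \<partial>lborel)"
    using lborel.nn_integral_fst[of "\<lambda>p. ennreal (g (fst p)) * ennreal (f (snd p)) * indicator A (fst p * snd p)" lborel]
    by simp
  also have "\<dots> = (\<integral>\<^sup>+y. \<integral>\<^sup>+z. ennreal (if 0 < y \<and> y < 1 then g y * f (z / y) / y else 0)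
                        * indicator A z \<partial>lborel \<partial>lborel)"
  proof (rule nn_integral_cong)
    fix y :: real
    show "(\<integral>\<^sup>+x. ennreal (g y) * ennreal (f x) * indicator A (y * x) \<partial>lborel)
        = (\<integral>\<^sup>+z. ennreal (if 0 < y \<and> y < 1 then g y * f (z / y) / y else 0) * indicator A z \<partial>lborel)"
    proof (cases "0 < y \<and> y < 1")
      case True
      \<comment> \<open>substitute \<open>x = z / y\<close>\<close>
      have "(\<integral>\<^sup>+x. ennreal (g y) * ennreal (f x) * indicator A (y * x) \<partial>lborel)
          = ennreal (1 / y) * (\<integral>\<^sup>+z. ennreal (g y) * ennreal (f (z / y)) * indicator A z \<partial>lborel)"
        using True by (subst nn_integral_real_affine[where c = "1 / y" and t = 0]) auto
      also have "\<dots> = (\<integral>\<^sup>+z. ennreal (g y * f (z / y) / y) * indicator A z \<partial>lborel)"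
        using True fg by (subst nn_integral_cmult[symmetric]) (auto simp: ennreal_mult'[symmetric] mult_ac)
      finally show ?thesis
        using True by simp
    next
      case False
      then have "g y = 0"
        unfolding g_def beta_density_def by (rule if_not_P)
      then show ?thesis
        by (simp cong: if_cong)
    qed
  qed
  also have "\<dots> = (\<integral>\<^sup>+z. \<integral>\<^sup>+y. ennreal (if 0 < y \<and> y < 1 then g y * f (z / y) / y else 0)
                        * indicator A z \<partial>lborel \<partial>lborel)"
    by (rule lborel_pair.Fubini') simp
  also have "\<dots> = (\<integral>\<^sup>+z. ennreal (beta_density a (b + c) z) * indicator A z \<partial>lborel)"
    unfolding f_def g_def
    by (intro nn_integral_cong) (simp add: nn_integral_multc nn_integral_beta_density_quotient[OF a b c])
  also have "\<dots> = emeasure (beta_measure a (b + c)) A"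
    unfolding beta_measure_def by (simp add: emeasure_density)
  finally show "emeasure (distr (beta_measure (a + b) c \<Otimes>\<^sub>M beta_measure a b) borel (\<lambda>p. fst p * snd p)) A
      = emeasure (beta_measure a (b + c)) A" .
qed (simp add: beta_measure_def)

lemma distributed_beta_imp_distr_eq:
  assumes "distributed M lborel X (\<lambda>x. ennreal (beta_density a b x))"
  shows "distr M borel X = beta_measure a b"
proof -
  have "distr M borel X = distr M lborel X"
    by (rule distr_cong) auto
  with assms show ?thesis
    by (simp add: distributed_def beta_measure_def)
qed

lemma sigma_sets_vimage_compose_subset:
  assumes X: "X \<in> measurable M N" and f: "f \<in> measurable N N'"
  shows "sigma_sets (space M) {(\<lambda>\<omega>. f (X \<omega>)) -` A \<inter> space M | A. A \<in> sets N'}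
       \<subseteq> sigma_sets (space M) {X -` A \<inter> space M | A. A \<in> sets N}"
proof (rule sigma_sets_subseteq, safe)
  fix A assume "A \<in> sets N'"
  then have "f -` A \<inter> space N \<in> sets N"
    and "(\<lambda>\<omega>. f (X \<omega>)) -` A \<inter> space M = X -` (f -` A \<inter> space N) \<inter> space M"
    using measurable_space[OF X] f by (auto simp: measurable_sets)
  then show "\<exists>B. (\<lambda>\<omega>. f (X \<omega>)) -` A \<inter> space M = X -` B \<inter> space M \<and> B \<in> sets N"
    by blast
qed

context prob_space
begin

lemma distr_mult_indep_beta:
  fixes X Y :: "'a \<Rightarrow> real"
  assumes indep: "indep_var borel Y borel X"
    and a: "0 < a" and b: "0 < b" and c: "0 < c"
    and X: "distr M borel X = beta_measure a b" and Y: "distr M borel Y = beta_measure (a + b) c"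
  shows "distr M borel (\<lambda>\<omega>. Y \<omega> * X \<omega>) = beta_measure a (b + c)"
proof -
  have [measurable]: "Y \<in> borel_measurable M" "X \<in> borel_measurable M"
    and joint: "distr M borel Y \<Otimes>\<^sub>M distr M borel X = distr M (borel \<Otimes>\<^sub>M borel) (\<lambda>\<omega>. (Y \<omega>, X \<omega>))"
    using indep unfolding indep_var_distribution_eq by blast+
  have "distr M borel (\<lambda>\<omega>. Y \<omega> * X \<omega>)
      = distr (distr M (borel \<Otimes>\<^sub>M borel) (\<lambda>\<omega>. (Y \<omega>, X \<omega>))) borel (\<lambda>p. fst p * snd p)"
    by (subst distr_distr) (auto simp: comp_def)
  also have "\<dots> = beta_measure a (b + c)"
    unfolding joint[symmetric] X Y by (rule distr_beta_measure_mult[OF a b c])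
  finally show ?thesis .
qed

lemma distr_prod_indep_beta_chain:
  fixes V :: "nat \<Rightarrow> 'a \<Rightarrow> real" and \<beta> :: "nat \<Rightarrow> real"
  assumes indep: "indep_vars (\<lambda>_. borel) V {0..n}"
    and a: "0 < a" and \<beta>0: "0 < \<beta> 0" and \<beta>_less: "\<And>j. j < n \<Longrightarrow> \<beta> j < \<beta> (Suc j)"
    and V0: "distr M borel (V 0) = beta_measure a (\<beta> 0)"
    and V: "\<And>j. j < n \<Longrightarrow> distr M borel (V (Suc j)) = beta_measure (a + \<beta> j) (\<beta> (Suc j) - \<beta> j)"
    and "m \<le> n"
  shows "distr M borel (\<lambda>\<omega>. \<Prod>j\<in>{0..m}. V j \<omega>) = beta_measure a (\<beta> m)"
  using \<open>m \<le> n\<close>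
proof (induction m)
  case 0
  then show ?case
    using V0 by simp
next
  case (Suc m)
  have "0 < \<beta> j" if "j \<le> m" for j
    using that Suc.prems
  proof (induction j)
    case (Suc j)
    then show ?case
      using \<beta>_less[of j] by simp
  qed (rule \<beta>0)
  moreover have "indep_var borel (V (Suc m)) borel (\<lambda>\<omega>. \<Prod>j\<in>{0..m}. V j \<omega>)"
    using Suc.prems by (intro indep_vars_prod indep_vars_subset[OF indep]) auto
  ultimately have "distr M borel (\<lambda>\<omega>. V (Suc m) \<omega> * (\<Prod>j\<in>{0..m}. V j \<omega>))
      = beta_measure a (\<beta> m + (\<beta> (Suc m) - \<beta> m))"
    using Suc \<beta>_less[of m] by (intro distr_mult_indep_beta a V) auto
  then show ?case
    by (simp add: prod.atLeast0_atMost_Suc mult.commute)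
qed

text \<open>The chain above with \<open>\<beta> j = \<alpha> 1 + \<dots> + \<alpha> (j + 1) + l (k + 1)\<close>.\<close>
lemma distr_prod_nested_beta:
  fixes V :: "nat \<Rightarrow> 'a \<Rightarrow> real" and \<alpha> :: "nat \<Rightarrow> real"
  assumes indep: "indep_vars (\<lambda>_. borel) V {0..n}"
    and l: "0 \<le> l" "l < 1" and \<alpha>: "\<And>j. j \<in> {1..Suc n} \<Longrightarrow> 0 < \<alpha> j"
    and V0: "distributed M lborel (V 0) (\<lambda>x. ennreal (beta_density (1 - l) (\<alpha> 1 + l * real (Suc k)) x))"
    and V: "\<And>j. j \<in> {1..n} \<Longrightarrow> distributed M lborel (V j)
              (\<lambda>x. ennreal (beta_density (1 + (\<Sum>m\<in>{1..j}. \<alpha> m) + l * real k) (\<alpha> (Suc j)) x))"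
    and "m \<le> n"
  shows "distr M borel (\<lambda>\<omega>. \<Prod>j\<in>{0..m}. V j \<omega>) = beta_measure (1 - l) ((\<Sum>j\<in>{1..Suc m}. \<alpha> j) + l * real (Suc k))"
proof -
  define \<beta> where "\<beta> j = (\<Sum>m\<in>{1..Suc j}. \<alpha> m) + l * real (Suc k)" for j
  have "distr M borel (\<lambda>\<omega>. \<Prod>j\<in>{0..m}. V j \<omega>) = beta_measure (1 - l) (\<beta> m)"
  proof (rule distr_prod_indep_beta_chain[OF indep _ _ _ _ _ \<open>m \<le> n\<close>])
    show "0 < \<beta> 0"
      using \<alpha>[of 1] l by (simp add: \<beta>_def add_pos_nonneg)
    show "\<beta> j < \<beta> (Suc j)" if "j < n" for j
      using \<alpha>[of "Suc (Suc j)"] that by (simp add: \<beta>_def)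
    show "distr M borel (V (Suc j)) = beta_measure (1 - l + \<beta> j) (\<beta> (Suc j) - \<beta> j)" if "j < n" for j
    proof -
      have "1 + (\<Sum>m\<in>{1..Suc j}. \<alpha> m) + l * real k = 1 - l + \<beta> j"
        and "\<alpha> (Suc (Suc j)) = \<beta> (Suc j) - \<beta> j"
        by (simp_all add: \<beta>_def algebra_simps)
      moreover have "Suc j \<in> {1..n}"
        using that by simp
      ultimately show ?thesis
        using distributed_beta_imp_distr_eq[OF V] by metis
    qed
  qed (use V0 l in \<open>simp_all add: \<beta>_def distributed_beta_imp_distr_eq\<close>)
  then show ?thesis
    by (simp add: \<beta>_def)
qed

lemma distr_PiM_UNIV_indep_vars:
  assumes indep: "indep_vars (\<lambda>_. N) X UNIV" and law: "\<And>k. distr M N (X k) = L k"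
  shows "distr M (PiM UNIV (\<lambda>_. N)) (\<lambda>\<omega> k. X k \<omega>) = PiM UNIV L"
proof -
  have "\<And>k. random_variable N (X k)"
    using indep by (auto simp: indep_vars_def)
  with indep show ?thesis
    by (subst (asm) indep_vars_iff_distr_eq_PiM) (simp_all add: restrict_UNIV law)
qed

lemma distr_Pair_indep_set:
  assumes X [measurable]: "X \<in> measurable M N1" and Y [measurable]: "Y \<in> measurable M N2"
    and indep: "indep_set (sigma_sets (space M) {X -` A \<inter> space M | A. A \<in> sets N1})
                          (sigma_sets (space M) {Y -` A \<inter> space M | A. A \<in> sets N2})"
  shows "distr M (N1 \<Otimes>\<^sub>M N2) (\<lambda>\<omega>. (X \<omega>, Y \<omega>)) = distr M N1 X \<Otimes>\<^sub>M distr M N2 Y"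
proof (rule pair_measure_eqI[symmetric])
  show "sigma_finite_measure (distr M N1 X)" "sigma_finite_measure (distr M N2 Y)"
    by (simp_all add: prob_space_imp_sigma_finite prob_space_distr)
  fix A B assume "A \<in> sets (distr M N1 X)" "B \<in> sets (distr M N2 Y)"
  then have A: "A \<in> sets N1" and B: "B \<in> sets N2"
    by auto
  have "prob ((X -` A \<inter> space M) \<inter> (Y -` B \<inter> space M)) = prob (X -` A \<inter> space M) * prob (Y -` B \<inter> space M)"
    using indep A B unfolding indep_sets2_eq by blast
  moreover have "(\<lambda>\<omega>. (X \<omega>, Y \<omega>)) -` (A \<times> B) \<inter> space M = (X -` A \<inter> space M) \<inter> (Y -` B \<inter> space M)"
    by auto
  ultimately show "emeasure (distr M N1 X) A * emeasure (distr M N2 Y) B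
      = emeasure (distr M (N1 \<Otimes>\<^sub>M N2) (\<lambda>\<omega>. (X \<omega>, Y \<omega>))) (A \<times> B)"
    using A B by (simp add: emeasure_distr emeasure_eq_measure ennreal_mult[symmetric])
qed (simp add: sets_pair_measure_cong[OF sets_distr sets_distr])

lemma indep_set_compose:
  assumes indep: "indep_set (sigma_sets (space M) {X -` A \<inter> space M | A. A \<in> sets N1})
                            (sigma_sets (space M) {Y -` A \<inter> space M | A. A \<in> sets N2})"
    and X: "X \<in> measurable M N1" and Y: "Y \<in> measurable M N2"
    and f: "f \<in> measurable N1 N1'" and g: "g \<in> measurable N2 N2'"
  shows "indep_set (sigma_sets (space M) {(\<lambda>\<omega>. f (X \<omega>)) -` A \<inter> space M | A. A \<in> sets N1'})
                   (sigma_sets (space M) {(\<lambda>\<omega>. g (Y \<omega>)) -` A \<inter> space M | A. A \<in> sets N2'})"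
  using sigma_sets_vimage_compose_subset[OF X f] sigma_sets_vimage_compose_subset[OF Y g]
  unfolding indep_set_def
  by (intro indep_sets_mono_sets[OF indep[unfolded indep_set_def]]) (auto split: bool.split)

end

lemma is_PD_if_distr_eq_PD_space:
  fixes \<Phi> :: "'w \<Rightarrow> (nat \<Rightarrow> real) \<times> (nat \<Rightarrow> 'x::topological_space)"
  assumes \<Phi>: "\<Phi> \<in> measurable M (PiM UNIV (\<lambda>_. borel) \<Otimes>\<^sub>M PiM UNIV (\<lambda>_. borel))"
    and law: "distr M (PiM UNIV (\<lambda>_. borel) \<Otimes>\<^sub>M PiM UNIV (\<lambda>_. borel)) \<Phi> = PD_space \<alpha> l H"
  shows "is_PD borel M (\<lambda>\<omega>. PD_rm (\<Phi> \<omega>)) \<alpha> l H"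
  unfolding is_PD_def same_law_rm_def
proof (intro allI impI)
  fix As :: "'x set list"
  assume As: "set As \<subseteq> sets borel"
  let ?N = "PiM {..<length As} (\<lambda>_. borel :: ennreal measure)"
  let ?F = "\<lambda>p. restrict (\<lambda>n. PD_rm p (As ! n)) {..<length As}"
  have "?F \<in> measurable (PiM UNIV (\<lambda>_. borel) \<Otimes>\<^sub>M PiM UNIV (\<lambda>_. borel)) ?N"
  proof (rule measurable_restrict)
    fix n assume "n \<in> {..<length As}"
    then have [measurable]: "As ! n \<in> sets borel"
      using As by auto
    show "(\<lambda>p. PD_rm p (As ! n)) \<in> borel_measurable (PiM UNIV (\<lambda>_. borel) \<Otimes>\<^sub>M PiM UNIV (\<lambda>_. borel))"
      unfolding PD_rm_def atomic_rm_def stick_weights_def by measurable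
  qed
  then have "distr M ?N (?F \<circ> \<Phi>) = distr (PD_space \<alpha> l H) ?N ?F"
    by (simp only: distr_distr[symmetric, OF _ \<Phi>] law)
  then show "distr M ?N (\<lambda>\<omega>. restrict (\<lambda>n. PD_rm (\<Phi> \<omega>) (As ! n)) {..<length As}) = distr (PD_space \<alpha> l H) ?N ?F"
    by (simp add: comp_def)
qed

lemma (in prob_space) is_PD_stick_breaking:
  fixes T :: "nat \<Rightarrow> 'a \<Rightarrow> real" and Y :: "nat \<Rightarrow> 'a \<Rightarrow> 'x::topological_space"
  assumes T_law: "\<And>k. distr M borel (T k) = beta_measure (1 - l) (\<alpha> + l * real (Suc k))"
    and T_indep: "indep_vars (\<lambda>_. borel) T UNIV"
    and Y_law: "\<And>k. distr M borel (Y k) = H"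
    and Y_indep: "indep_vars (\<lambda>_. borel) Y UNIV"
    and TY_indep: "indep_set
      (sigma_sets (space M) {(\<lambda>\<omega> k. T k \<omega>) -` A \<inter> space M | A. A \<in> sets (PiM UNIV (\<lambda>_. borel :: real measure))})
      (sigma_sets (space M) {(\<lambda>\<omega> k. Y k \<omega>) -` A \<inter> space M | A. A \<in> sets (PiM UNIV (\<lambda>_. borel :: 'x measure))})"
  shows "is_PD borel M (\<lambda>\<omega>. atomic_rm (stick_weights (\<lambda>k. T k \<omega>)) (\<lambda>k. Y k \<omega>)) \<alpha> l H"
proof -
  have [measurable]: "T k \<in> borel_measurable M" "Y k \<in> borel_measurable M" for k
    using T_indep Y_indep by (auto simp: indep_vars_def)
  have T: "(\<lambda>\<omega> k. T k \<omega>) \<in> measurable M (PiM UNIV (\<lambda>_. borel))"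
    and Y: "(\<lambda>\<omega> k. Y k \<omega>) \<in> measurable M (PiM UNIV (\<lambda>_. borel))"
    using measurable_restrict[of UNIV "\<lambda>k. T k" M "\<lambda>_. borel"]
      measurable_restrict[of UNIV "\<lambda>k. Y k" M "\<lambda>_. borel"]
    by (simp_all add: restrict_UNIV)
  have "distr M (PiM UNIV (\<lambda>_. borel) \<Otimes>\<^sub>M PiM UNIV (\<lambda>_. borel)) (\<lambda>\<omega>. (\<lambda>k. T k \<omega>, \<lambda>k. Y k \<omega>))
      = PD_space \<alpha> l H"
    by (simp add: distr_Pair_indep_set[OF T Y TY_indep] PD_space_def distr_PiM_UNIV_indep_vars
        T_indep T_law Y_indep Y_law)
  from is_PD_if_distr_eq_PD_space[OF measurable_Pair[OF T Y] this] show ?thesis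
    by (simp add: PD_rm_def)
qed

lemma (in prob_space) is_PD_coordinate:
  fixes \<phi> :: "nat \<Rightarrow> 'a \<Rightarrow> 'i \<Rightarrow> 'x::topological_space" and S :: "'i \<Rightarrow> nat \<Rightarrow> 'a \<Rightarrow> real"
  assumes i: "i \<in> I"
    and phi_meas: "\<And>k. \<phi> k \<in> measurable M (PiM I (\<lambda>_. borel))"
    and phi_law: "\<And>k. distr M (PiM I (\<lambda>_. borel)) (\<phi> k) = G0"
    and phi_indep: "indep_vars (\<lambda>_. PiM I (\<lambda>_. borel)) \<phi> UNIV"
    and S_indep: "indep_vars (\<lambda>_. PiM I (\<lambda>_. borel :: real measure)) (\<lambda>k \<omega>. restrict (\<lambda>i. S i k \<omega>) I) UNIV"
    and S_phi_indep: "indep_set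
      (sigma_sets (space M) {(\<lambda>\<omega>. restrict (\<lambda>(i, k). S i k \<omega>) (I \<times> UNIV)) -` A \<inter> space M
                              | A. A \<in> sets (PiM (I \<times> UNIV) (\<lambda>_. borel :: real measure))})
      (sigma_sets (space M) {(\<lambda>\<omega> k. \<phi> k \<omega>) -` A \<inter> space M
                              | A. A \<in> sets (PiM UNIV (\<lambda>_. PiM I (\<lambda>_. borel :: 'x measure)))})"
    and S_law: "\<And>k. distr M borel (S i k) = beta_measure (1 - l) (\<alpha> + l * real (Suc k))"
  shows "is_PD borel M (\<lambda>\<omega>. atomic_rm (stick_weights (\<lambda>k. S i k \<omega>)) (\<lambda>k. \<phi> k \<omega> i))
           \<alpha> l (distr G0 borel (\<lambda>y. y i))"
proof (rule is_PD_stick_breaking[OF S_law])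
  have coord: "(\<lambda>y. y j) \<in> measurable (PiM I (\<lambda>_. borel)) borel" if "j \<in> I" for j
    using that by simp
  have S_j_indep: "indep_vars (\<lambda>_. borel) (S j) UNIV" if "j \<in> I" for j
    using indep_vars_compose2[OF S_indep coord[OF that]] that by simp
  then show "indep_vars (\<lambda>_. borel) (S i) UNIV"
    using i .
  from indep_vars_compose2[OF phi_indep coord[OF i]] show "indep_vars (\<lambda>_. borel) (\<lambda>k \<omega>. \<phi> k \<omega> i) UNIV" .
  show "distr M borel (\<lambda>\<omega>. \<phi> k \<omega> i) = distr G0 borel (\<lambda>y. y i)" for k
    using distr_distr[OF coord[OF i] phi_meas, of k] by (simp add: phi_law comp_def)
  have "S j k \<in> borel_measurable M" if "j \<in> I" for j k
    using S_j_indep[OF that] by (simp add: indep_vars_def)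
  then have S_meas: "(\<lambda>\<omega>. restrict (\<lambda>(i, k). S i k \<omega>) (I \<times> UNIV)) \<in> measurable M (PiM (I \<times> UNIV) (\<lambda>_. borel))"
    by (auto intro!: measurable_restrict)
  have phi_seq_meas: "(\<lambda>\<omega> k. \<phi> k \<omega>) \<in> measurable M (PiM UNIV (\<lambda>_. PiM I (\<lambda>_. borel)))"
    using measurable_restrict[of UNIV \<phi> M "\<lambda>_. PiM I (\<lambda>_. borel)"] phi_meas by (simp add: restrict_UNIV)
  have S_row: "(\<lambda>x k. x (i, k)) \<in> measurable (PiM (I \<times> UNIV) (\<lambda>_. borel)) (PiM UNIV (\<lambda>_. borel :: real measure))"
    using measurable_restrict[of UNIV "\<lambda>k x. x (i, k)" "PiM (I \<times> UNIV) (\<lambda>_. borel)" "\<lambda>_. borel"] i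
    by (simp add: restrict_UNIV)
  have phi_coord: "(\<lambda>x k. x k i) \<in> measurable (PiM UNIV (\<lambda>_. PiM I (\<lambda>_. borel))) (PiM UNIV (\<lambda>_. borel :: 'x measure))"
    using measurable_restrict[of UNIV "\<lambda>k x. x k i" "PiM UNIV (\<lambda>_. PiM I (\<lambda>_. borel))" "\<lambda>_. borel"]
      measurable_compose[OF measurable_component_singleton[of _ UNIV "\<lambda>_. PiM I (\<lambda>_. borel)"] coord[OF i]]
    by (auto simp: restrict_UNIV)
  from indep_set_compose[OF S_phi_indep S_meas phi_seq_meas S_row phi_coord] show "indep_set
      (sigma_sets (space M) {(\<lambda>\<omega> k. S i k \<omega>) -` A \<inter> space M | A. A \<in> sets (PiM UNIV (\<lambda>_. borel :: real measure))})
      (sigma_sets (space M) {(\<lambda>\<omega> k. \<phi> k \<omega> i) -` A \<inter> space M | A. A \<in> sets (PiM UNIV (\<lambda>_. borel :: 'x measure))})"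
    using i by simp
qed

theorem proposition4:
  fixes M :: "'w measure" and r :: nat and l :: real
    and G0 :: "(nat \<Rightarrow> 'x::polish_space) measure"
    and \<phi> :: "nat \<Rightarrow> 'w \<Rightarrow> (nat \<Rightarrow> 'x)"
    and S :: "nat \<Rightarrow> nat \<Rightarrow> 'w \<Rightarrow> real"
  assumes M: "prob_space M"
    and r: "r \<ge> 2"
    and l: "0 \<le> l" "l < 1"
    and G0: "prob_space G0" "sets G0 = sets (PiM {1..r} (\<lambda>_. borel :: 'x measure))"
    and phi_meas: "\<And>k. \<phi> k \<in> measurable M (PiM {1..r} (\<lambda>_. borel :: 'x measure))"
    and phi_law: "\<And>k. distr M (PiM {1..r} (\<lambda>_. borel :: 'x measure)) (\<phi> k) = G0"
    and phi_indep: "prob_space.indep_vars M (\<lambda>_. PiM {1..r} (\<lambda>_. borel :: 'x measure)) \<phi> UNIV"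
    and S_indep: "prob_space.indep_vars M (\<lambda>_. PiM {1..r} (\<lambda>_. borel :: real measure))
                    (\<lambda>k \<omega>. restrict (\<lambda>i. S i k \<omega>) {1..r}) UNIV"
    and S_phi_indep: "prob_space.indep_set M
                    (sigma_sets (space M)
                      {(\<lambda>\<omega>. restrict (\<lambda>(i, k). S i k \<omega>) ({1..r} \<times> UNIV)) -` A \<inter> space M
                        | A. A \<in> sets (PiM ({1..r} \<times> UNIV) (\<lambda>_. borel :: real measure))})
                    (sigma_sets (space M)
                      {(\<lambda>\<omega>. \<lambda>k. \<phi> k \<omega>) -` A \<inter> space M
                        | A. A \<in> sets (PiM UNIV (\<lambda>_. PiM {1..r} (\<lambda>_. borel :: 'x measure)))})"
  shows
    "(\<forall>(\<alpha>1::real) (\<alpha>2::real) (V :: nat \<Rightarrow> nat \<Rightarrow> 'w \<Rightarrow> real).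
        0 < \<alpha>1 \<and> 0 < \<alpha>2
      \<and> (\<forall>i\<in>{1..r}. \<forall>k \<omega>. S i k \<omega> = V 0 k \<omega> * V i k \<omega>)
      \<and> (\<forall>k. prob_space.indep_vars M (\<lambda>_. borel) (\<lambda>j. V j k) {0..r})
      \<and> (\<forall>k. distributed M lborel (V 0 k)
                (\<lambda>x. ennreal (beta_density (1 - l + \<alpha>1) (\<alpha>2 + l * real (Suc k)) x)))
      \<and> (\<forall>i\<in>{1..r}. \<forall>k. distributed M lborel (V i k)
                (\<lambda>x. ennreal (beta_density (1 - l) \<alpha>1 x)))
      \<longrightarrow> (\<forall>i\<in>{1..r}. is_PD borel M (\<lambda>\<omega>. atomic_rm (stick_weights (\<lambda>k. S i k \<omega>)) (\<lambda>k. \<phi> k \<omega> i))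
                         (\<alpha>1 + \<alpha>2) l (distr G0 borel (\<lambda>y. y i))))
   \<and> (\<forall>(\<alpha> :: nat \<Rightarrow> real) (V :: nat \<Rightarrow> nat \<Rightarrow> 'w \<Rightarrow> real).
        (\<forall>j\<in>{1..r}. 0 < \<alpha> j)
      \<and> (\<forall>i\<in>{1..r}. \<forall>k \<omega>. S i k \<omega> = (\<Prod>j\<in>{0..r - i}. V j k \<omega>))
      \<and> (\<forall>k. prob_space.indep_vars M (\<lambda>_. borel) (\<lambda>j. V j k) {0..r - 1})
      \<and> (\<forall>k. distributed M lborel (V 0 k)
                (\<lambda>x. ennreal (beta_density (1 - l) (\<alpha> 1 + l * real (Suc k)) x)))
      \<and> (\<forall>j\<in>{1..r - 1}. \<forall>k. distributed M lborel (V j k)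
                (\<lambda>x. ennreal (beta_density (1 + (\<Sum>m\<in>{1..j}. \<alpha> m) + l * real k) (\<alpha> (Suc j)) x)))
      \<longrightarrow> (\<forall>i\<in>{1..r}. is_PD borel M (\<lambda>\<omega>. atomic_rm (stick_weights (\<lambda>k. S i k \<omega>)) (\<lambda>k. \<phi> k \<omega> i))
                         (\<Sum>m\<in>{1..r - i + 1}. \<alpha> m) l (distr G0 borel (\<lambda>y. y i))))"
proof -
  interpret prob_space M
    by (rule M)
  have marginal: "is_PD borel M (\<lambda>\<omega>. atomic_rm (stick_weights (\<lambda>k. S i k \<omega>)) (\<lambda>k. \<phi> k \<omega> i))
      \<theta> l (distr G0 borel (\<lambda>y. y i))"
    if "i \<in> {1..r}" and "\<And>k. distr M borel (S i k) = beta_measure (1 - l) (\<theta> + l * real (Suc k))" for i \<theta>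
    by (rule is_PD_coordinate[OF that(1) phi_meas phi_law phi_indep S_indep S_phi_indep that(2)])
  show ?thesis
  proof (intro conjI allI impI ballI; elim conjE)
    fix \<alpha>1 \<alpha>2 :: real and V :: "nat \<Rightarrow> nat \<Rightarrow> 'w \<Rightarrow> real" and i
    assume \<alpha>: "0 < \<alpha>1" "0 < \<alpha>2" and i: "i \<in> {1..r}"
      and S: "\<forall>i\<in>{1..r}. \<forall>k \<omega>. S i k \<omega> = V 0 k \<omega> * V i k \<omega>"
      and V_indep: "\<forall>k. indep_vars (\<lambda>_. borel) (\<lambda>j. V j k) {0..r}"
      and V0: "\<forall>k. distributed M lborel (V 0 k) (\<lambda>x. ennreal (beta_density (1 - l + \<alpha>1) (\<alpha>2 + l * real (Suc k)) x))"
      and Vi: "\<forall>i\<in>{1..r}. \<forall>k. distributed M lborel (V i k) (\<lambda>x. ennreal (beta_density (1 - l) \<alpha>1 x))"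
    show "is_PD borel M (\<lambda>\<omega>. atomic_rm (stick_weights (\<lambda>k. S i k \<omega>)) (\<lambda>k. \<phi> k \<omega> i))
        (\<alpha>1 + \<alpha>2) l (distr G0 borel (\<lambda>y. y i))"
    proof (rule marginal[OF i])
      fix k
      have "indep_vars (\<lambda>_. borel) (\<lambda>j. V j k) (insert 0 {i})"
        using V_indep i by (auto intro: indep_vars_subset)
      then have "indep_var borel (V 0 k) borel (V i k)"
        using indep_vars_prod[of "{i}" 0 "\<lambda>j. V j k"] i by simp
      then have "distr M borel (\<lambda>\<omega>. V 0 k \<omega> * V i k \<omega>) = beta_measure (1 - l) (\<alpha>1 + (\<alpha>2 + l * real (Suc k)))"
        using \<alpha> l V0 Vi i
        by (intro distr_mult_indep_beta distributed_beta_imp_distr_eq) (auto intro: add_pos_nonneg)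
      moreover have "S i k = (\<lambda>\<omega>. V 0 k \<omega> * V i k \<omega>)"
        using S i by auto
      ultimately show "distr M borel (S i k) = beta_measure (1 - l) (\<alpha>1 + \<alpha>2 + l * real (Suc k))"
        by (simp add: add.assoc)
    qed
  next
    fix \<alpha> :: "nat \<Rightarrow> real" and V :: "nat \<Rightarrow> nat \<Rightarrow> 'w \<Rightarrow> real" and i
    assume \<alpha>: "\<forall>j\<in>{1..r}. 0 < \<alpha> j" and i: "i \<in> {1..r}"
      and S: "\<forall>i\<in>{1..r}. \<forall>k \<omega>. S i k \<omega> = (\<Prod>j\<in>{0..r - i}. V j k \<omega>)"
      and V_indep: "\<forall>k. indep_vars (\<lambda>_. borel) (\<lambda>j. V j k) {0..r - 1}"
      and V0: "\<forall>k. distributed M lborel (V 0 k) (\<lambda>x. ennreal (beta_density (1 - l) (\<alpha> 1 + l * real (Suc k)) x))"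
      and Vj: "\<forall>j\<in>{1..r - 1}. \<forall>k. distributed M lborel (V j k)
                 (\<lambda>x. ennreal (beta_density (1 + (\<Sum>m\<in>{1..j}. \<alpha> m) + l * real k) (\<alpha> (Suc j)) x))"
    show "is_PD borel M (\<lambda>\<omega>. atomic_rm (stick_weights (\<lambda>k. S i k \<omega>)) (\<lambda>k. \<phi> k \<omega> i))
        (\<Sum>m\<in>{1..r - i + 1}. \<alpha> m) l (distr G0 borel (\<lambda>y. y i))"
    proof (rule marginal[OF i])
      fix k
      have "distr M borel (\<lambda>\<omega>. \<Prod>j\<in>{0..r - i}. V j k \<omega>)
          = beta_measure (1 - l) ((\<Sum>j\<in>{1..Suc (r - i)}. \<alpha> j) + l * real (Suc k))"
        using V_indep l \<alpha> V0 Vj i by (intro distr_prod_nested_beta[where n = "r - 1"]) auto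
      moreover have "S i k = (\<lambda>\<omega>. \<Prod>j\<in>{0..r - i}. V j k \<omega>)"
        using S i by auto
      ultimately show "distr M borel (S i k) = beta_measure (1 - l) ((\<Sum>m\<in>{1..r - i + 1}. \<alpha> m) + l * real (Suc k))"
        by simp
    qed
  qed
qed

end
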